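(* Let $\Pi$ be a program and $e=(e_{in},e_{out})$ an example with $[\![\Pi]\!]e_{in}\neq e_{out}$, and let $\mathcal{P}\subseteq\mathcal{U}$ be such that $e_{out}\in\gamma(\mathrm{EvalAbstract}(\Pi,e_{in},\mathcal{P}))$. Then the mapping $\mathcal{I}$ returned by $\textsc{ConstructProof}(\Pi,e,\mathcal{P},\mathcal{U})$ is a proof of incorrectness of $\Pi$ with respect to $e$. That is: (1) for every leaf $v$ labelled by terminal $t$, $(t=[\![t]\!]e_{in})\sqsubseteq\mathcal{I}(v)$; (2) for every internal node $v$ labelled $f$ with children $v_1,\dots,v_n$, $[\![f(\mathcal{I}(v_1),\dots,\mathcal{I}(v_n))]\!]^\#\sqsubseteq\mathcal{I}(v)$; (3) $e_{out}\notin\gamma(\mathcal{I}(\mathrm{root}(\Pi)))$.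
   Context: A DSL is given by a context-free grammar $G$ with start symbol $s_0$. Productions have the form $s\to t$, where $t$ is the input variable $x$ or a constant, or $s\to f(s_1,\dots,s_n)$. Programs are finite ASTs derived from $s_0$, and each node carries the grammar symbol it derives from. Concrete semantics: $[\![x]\!]c=c$; $[\![t]\!]$ is the value of constant $t$ (we write $[\![x]\!]e_{in}=e_{in}$); $[\![f(\Pi_1,\dots,\Pi_n)]\!]c=[\![f]\!]([\![\Pi_1]\!]c,\dots,[\![\Pi_n]\!]c)$. A predicate over grammar symbol $s$ is a formula with sole free variable $s$. An abstract value is a conjunction of predicates ($\mathit{true}$ is the empty one), $\gamma(\varphi)$ is its set of satisfying values, and $\varphi\sqsubseteq\varphi'$ iff $\varphi\Rightarrow\varphi'$. $\alpha^{\mathcal{P}}(\varphi)$ is the conjunction of all $p\in\mathcal{P}$ (over the relevant symbol) with $\varphi\Rightarrow p$. $\mathcal{U}$ is the universe of predicates, and an abstract value over $\mathcal{U}$ is a conjunction of predicates from $\mathcal{U}$. It is assumed that $\mathcal{U}$ contains every equality predicate $s=c$. Each $f$ has an abstract transformer $[\![f(\varphi_1,\dots,\varphi_n)]\!]^\#$ satisfying three properties. It is sound: $c_i\in\gamma(\varphi_i)$ implies $[\![f]\!](\vec c)\in\gamma([\![f(\vec\varphi)]\!]^\#)$. It is monotone with respect to $\sqsubseteq$. It is precise on concrete inputs: $[\![f(s_1=c_1,\dots,s_n=c_n)]\!]^\#\sqsubseteq(s=[\![f]\!](c_1,\dots,c_n))$. $\mathrm{EvalAbstract}(\Pi,c,\mathcal{P})$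 is defined recursively: $\alpha^{\mathcal{P}}(x=c)$ for leaf $x$; $\alpha^{\mathcal{P}}(t=[\![t]\!])$ for leaf constant $t$; $\alpha^{\mathcal{P}}([\![f(\mathrm{EvalAbstract}(\Pi_1,c,\mathcal{P}),\dots,\mathrm{EvalAbstract}(\Pi_n,c,\mathcal{P}))]\!]^\#)$ for a node $f(\Pi_1,\dots,\Pi_n)$. A fixed integer $k\ge1$ bounds conjunction lengths. $\mathrm{StrengthenRoot}(p_+,p_-,\varphi,\mathcal{U})$ works as follows. Let $\Phi=\{p\in\mathcal{U}: p_+\Rightarrow p\}$, and let $\Psi$ be the set of conjunctions of at most $k+1$ elements of $\Phi$. Start with $\psi^*:=p_+$. Iterate over $\psi\in\Psi$, replacing $\psi^*$ by $\psi$ whenever $\psi^*\Rightarrow\psi$ and $(\varphi\wedge\psi)\Rightarrow p_-$. Return $\psi^*$. $\mathrm{StrengthenChildren}(\vec\phi,\vec\varphi,\varphi_p,\mathcal{U},f)$ works as follows, with $\vec\phi=(\phi_1,\dots,\phi_n)$ and $\vec\varphi=(\varphi_1,\dots,\varphi_n)$. Let $\Phi_i=\{p\in\mathcal{U}:\phi_i\Rightarrow p\}$, and let $\Psi_i$ be the set of conjunctions of at most $k+1$ elements of $\Phi_i$. Start with $\vec\psi^*:=\vec\phi$. Iterate over all tuples $\vec\psi$ with $\psi_i\in\Psi_i$, replacing $\vec\psi^*$ by $\vec\psi$ whenever $\psi^*_i\Rightarrow\psi_i$ for all $i$ and $[\![f(\varphi_1\wedge\psi_1,\dots,\varphi_n\wedge\psi_n)]\!]^\#\Rightarrow\varphi_p$.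 Return $\vec\psi^*$. $\textsc{ConstructProof}(\Pi,e,\mathcal{P},\mathcal{U})$ works in two phases. First, for the root $r$: let $\varphi=\mathrm{EvalAbstract}(\Pi,e_{in},\mathcal{P})$ and $\psi=\mathrm{StrengthenRoot}(s_0=[\![\Pi]\!]e_{in},\ s_0\neq e_{out},\ \varphi,\ \mathcal{U})$, and set $\mathcal{I}(r)=\varphi\wedge\psi$. Then it processes a worklist initialised to $\{r\}$. While the worklist is nonempty, it removes a node $cur$, labelled $f$, with child subtrees $\Pi_1,\dots,\Pi_n$. It sets $\phi_i=(s_i=[\![\Pi_i]\!]e_{in})$, where $s_i$ is the grammar symbol of the root of $\Pi_i$, and $\varphi_i=\mathrm{EvalAbstract}(\Pi_i,e_{in},\mathcal{P})$. It computes $\vec\psi=\mathrm{StrengthenChildren}(\vec\phi,\vec\varphi,\mathcal{I}(cur),\mathcal{U},f)$ and sets $\mathcal{I}(\mathrm{root}(\Pi_i))=\varphi_i\wedge\psi_i$ for each $i$. Each non-leaf $\mathrm{root}(\Pi_i)$ is added to the worklist. Finally it returns $\mathcal{I}$. *)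

theory Defs
  imports Main
begin

text \<open>Every node carries the grammar symbol it derives from.  Leaves are the
input variable x or a constant t; internal nodes are applications of f.\<close>
datatype ('s,'c,'f) prog =
    Var 's
  | Const 's 'c
  | App 's 'f "('s,'c,'f) prog list"

datatype ('s,'c,'f) production =
    PVar 's
  | PConst 's 'c
  | PApp 's 'f "'s list"

fun sym_of :: "('s,'c,'f) prog \<Rightarrow> 's" where
  "sym_of (Var s) = s"
| "sym_of (Const s t) = s"
| "sym_of (App s f ps) = s"

fun derives :: "('s,'c,'f) production set \<Rightarrow> ('s,'c,'f) prog \<Rightarrow> bool" where
  "derives G (Var s) = (PVar s \<in> G)"
| "derives G (Const s t) = (PConst s t \<in> G)"
| "derives G (App s f ps) =
     (PApp s f (map sym_of ps) \<in> G \<and> list_all (derives G) ps)"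

fun eval :: "('c \<Rightarrow> 'v) \<Rightarrow> ('f \<Rightarrow> 'v list \<Rightarrow> 'v) \<Rightarrow> ('s,'c,'f) prog \<Rightarrow> 'v \<Rightarrow> 'v" where
  "eval cv fs (Var s) c = c"
| "eval cv fs (Const s t) c = cv t"
| "eval cv fs (App s f ps) c = fs f (map (\<lambda>q. eval cv fs q c) ps)"

text \<open>Nodes are identified by their positions (paths of child indices).\<close>
fun subtree :: "('s,'c,'f) prog \<Rightarrow> nat list \<Rightarrow> ('s,'c,'f) prog option" where
  "subtree p [] = Some p"
| "subtree (App s f ps) (i # is) = (if i < length ps then subtree (ps ! i) is else None)"
| "subtree _ _ = None"

text \<open>Predicates are elements of a type 'p; psym p is the grammar symbol the predicate
is over, den p the set of values satisfying it.  An abstract value is a conjunction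
of predicates, represented by the set of its conjuncts (empty set = true).\<close>

definition gam :: "('p \<Rightarrow> 'v set) \<Rightarrow> 'p set \<Rightarrow> 'v set" where
  "gam den \<phi> = {v. \<forall>p\<in>\<phi>. v \<in> den p}"

definition imp :: "('p \<Rightarrow> 'v set) \<Rightarrow> 'p set \<Rightarrow> 'p set \<Rightarrow> bool" where
  "imp den \<phi> \<psi> \<longleftrightarrow> gam den \<phi> \<subseteq> gam den \<psi>"

definition alpha :: "('p \<Rightarrow> 's) \<Rightarrow> ('p \<Rightarrow> 'v set) \<Rightarrow> 'p set \<Rightarrow> 's \<Rightarrow> 'p set \<Rightarrow> 'p set" where
  "alpha psym den P s \<phi> = {p \<in> P. psym p = s \<and> imp den \<phi> {p}}"

text \<open>EvalAbstract; eqp s c is the equality predicate (s = c); absT is the abstract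
transformer.\<close>
fun evalA :: "('p \<Rightarrow> 's) \<Rightarrow> ('p \<Rightarrow> 'v set) \<Rightarrow> ('s \<Rightarrow> 'v \<Rightarrow> 'p) \<Rightarrow> ('c \<Rightarrow> 'v)
    \<Rightarrow> ('f \<Rightarrow> 'p set list \<Rightarrow> 'p set) \<Rightarrow> 'p set \<Rightarrow> ('s,'c,'f) prog \<Rightarrow> 'v \<Rightarrow> 'p set" where
  "evalA psym den eqp cv absT P (Var s) c = alpha psym den P s {eqp s c}"
| "evalA psym den eqp cv absT P (Const s t) c = alpha psym den P s {eqp s (cv t)}"
| "evalA psym den eqp cv absT P (App s f ps) c =
     alpha psym den P s (absT f (map (\<lambda>q. evalA psym den eqp cv absT P q c) ps))"

definition conjs :: "nat \<Rightarrow> 'p set \<Rightarrow> 'p set set" where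
  "conjs k \<Phi> = {S. finite S \<and> S \<subseteq> \<Phi> \<and> card S \<le> k + 1}"

text \<open>res is a possible result of StrengthenRoot(p+, p-, \<phi>, U), for some order of
iteration over \<Psi> (pminus is given by its set of satisfying values).\<close>
definition strengthen_root_result ::
  "('p \<Rightarrow> 's) \<Rightarrow> ('p \<Rightarrow> 'v set) \<Rightarrow> 'p set \<Rightarrow> nat \<Rightarrow> 'p \<Rightarrow> 'v set \<Rightarrow> 'p set \<Rightarrow> 'p set \<Rightarrow> bool" where
  "strengthen_root_result psym den U k pplus pminus \<phi> res \<longleftrightarrow>
     (\<exists>L. distinct L \<and>
          set L = conjs k {p \<in> U. psym p = psym pplus \<and> imp den {pplus} {p}} \<and>
          res = fold (\<lambda>\<psi> acc. if imp den acc \<psi> \<and> gam den (\<phi> \<union> \<psi>) \<subseteq> pminus then \<psi> else acc)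
                     L {pplus})"

text \<open>res is a possible result of StrengthenChildren(phis, varphis, \<phi>p, U, f), for some
order of iteration over the tuples.\<close>
definition strengthen_children_result ::
  "('p \<Rightarrow> 's) \<Rightarrow> ('p \<Rightarrow> 'v set) \<Rightarrow> ('f \<Rightarrow> 'p set list \<Rightarrow> 'p set) \<Rightarrow> 'p set \<Rightarrow> nat \<Rightarrow> 'f
     \<Rightarrow> 'p list \<Rightarrow> 'p set list \<Rightarrow> 'p set \<Rightarrow> 'p set list \<Rightarrow> bool" where
  "strengthen_children_result psym den absT U k f phis varphis \<phi>p res \<longleftrightarrow>
     (\<exists>L. distinct L \<and>
          set L = {\<psi>s. length \<psi>s = length phis \<and>
                      (\<forall>i<length phis. \<psi>s ! i \<in>
                          conjs k {p \<in> U. psym p = psym (phis ! i) \<and> imp den {phis ! i} {p}})} \<and>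
          res = fold (\<lambda>\<psi>s acc.
                   if (\<forall>i<length phis. imp den (acc ! i) (\<psi>s ! i)) \<and>
                      imp den (absT f (map2 (\<union>) varphis \<psi>s)) \<phi>p
                   then \<psi>s else acc)
                 L (map (\<lambda>p. {p}) phis))"

text \<open>I is a possible output of ConstructProof(\<Pi>, (ein, eout), P, U): the root gets
EvalAbstract \<and> StrengthenRoot, and each processed node's children get
EvalAbstract \<and> StrengthenChildren (each node is processed exactly once).\<close>
definition construct_proof_result ::
  "('p \<Rightarrow> 's) \<Rightarrow> ('p \<Rightarrow> 'v set) \<Rightarrow> ('s \<Rightarrow> 'v \<Rightarrow> 'p) \<Rightarrow> ('c \<Rightarrow> 'v) \<Rightarrow> ('f \<Rightarrow> 'v list \<Rightarrow> 'v)
     \<Rightarrow> ('f \<Rightarrow> 'p set list \<Rightarrow> 'p set) \<Rightarrow> 'p set \<Rightarrow> 'p set \<Rightarrow> nat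
     \<Rightarrow> ('s,'c,'f) prog \<Rightarrow> 'v \<Rightarrow> 'v \<Rightarrow> (nat list \<Rightarrow> 'p set) \<Rightarrow> bool" where
  "construct_proof_result psym den eqp cv fs absT U P k \<Pi> ein eout I \<longleftrightarrow>
     (\<exists>\<psi>. strengthen_root_result psym den U k (eqp (sym_of \<Pi>) (eval cv fs \<Pi> ein)) (- {eout})
             (evalA psym den eqp cv absT P \<Pi> ein) \<psi> \<and>
          I [] = evalA psym den eqp cv absT P \<Pi> ein \<union> \<psi>) \<and>
     (\<forall>pos s f ps. subtree \<Pi> pos = Some (App s f ps) \<longrightarrow>
        (\<exists>\<psi>s. strengthen_children_result psym den absT U k f
                  (map (\<lambda>q. eqp (sym_of q) (eval cv fs q ein)) ps)
                  (map (\<lambda>q. evalA psym den eqp cv absT P q ein) ps)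
                  (I pos) \<psi>s \<and>
               (\<forall>i<length ps. I (pos @ [i]) = evalA psym den eqp cv absT P (ps ! i) ein \<union> \<psi>s ! i)))"

end

theory Submission
  imports Defs
begin

text \<open>Each strengthening step only picks conjunctions implied by the equality predicate
  it starts from, so the concrete value of every node satisfies its label; this gives the leaf
  conditions.  A candidate is accepted only if it passes the test of the loop, and the initial
  candidate passes it: at the root because the concrete output differs from the expected one,
  at an internal node because the abstract transformer is monotone and precise on concrete
  inputs, which the node's concrete value satisfies.  So the final labels pass the tests, which
  are exactly the internal-node condition and the exclusion of the expected output.\<close>

lemma fold_select_mem:
  "fold (\<lambda>x acc. if C x acc then x else acc) xs a \<in> insert a (set xs)"
proof (induction xs arbitrary: a)
  case (Cons y xs)
  then show ?case by (cases "C y a") fastforce+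
qed simp

lemma fold_select_invariant:
  assumes "R a" and "\<And>x acc. C x acc \<Longrightarrow> R x"
  shows "R (fold (\<lambda>x acc. if C x acc then x else acc) xs a)"
  using assms by (induction xs arbitrary: a) auto

lemma subtree_snocD:
  "subtree p (pos @ [i]) = Some q \<Longrightarrow>
   \<exists>s f ps. subtree p pos = Some (App s f ps) \<and> i < length ps \<and> ps ! i = q"
proof (induction pos arbitrary: p)
  case Nil
  then show ?case by (cases p) (auto split: if_splits)
next
  case (Cons j pos)
  then show ?case by (cases p) (auto split: if_splits)
qed

lemma gam_Un: "gam den (A \<union> B) = gam den A \<inter> gam den B"
  unfolding gam_def by auto

lemma gam_singleton: "gam den {p} = den p"
  unfolding gam_def by auto

lemma imp_singleton_iff:
  "den p = {c} \<Longrightarrow> imp den {p} \<phi> \<longleftrightarrow> c \<in> gam den \<phi>"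
  by (simp add: imp_def gam_singleton)

lemma imp_trans: "imp den \<phi> \<psi> \<Longrightarrow> imp den \<psi> \<chi> \<Longrightarrow> imp den \<phi> \<chi>"
  unfolding imp_def by blast

lemma imp_conjs: "\<psi> \<in> conjs k {p \<in> U. Q p \<and> imp den \<phi> {p}} \<Longrightarrow> imp den \<phi> \<psi>"
  unfolding conjs_def imp_def gam_def by blast

lemma gam_alpha_memI: "v \<in> gam den \<phi> \<Longrightarrow> v \<in> gam den (alpha psym den P s \<phi>)"
  unfolding alpha_def gam_def imp_def by auto

lemma eval_in_gam_evalA:
  assumes den_eqp: "\<And>s c. den (eqp s c) = {c}"
    and sound: "\<And>f \<phi>s cs. length cs = length \<phi>s \<Longrightarrow> (\<forall>i<length cs. cs ! i \<in> gam den (\<phi>s ! i))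
                   \<Longrightarrow> fs f cs \<in> gam den (absT f \<phi>s)"
  shows "eval cv fs q c \<in> gam den (evalA psym den eqp cv absT P q c)"
proof (induction q)
  case (Var s)
  show ?case by (simp add: gam_alpha_memI gam_singleton den_eqp)
next
  case (Const s t)
  show ?case by (simp add: gam_alpha_memI gam_singleton den_eqp)
next
  case (App s f ps)
  then have "fs f (map (\<lambda>q. eval cv fs q c) ps)
      \<in> gam den (absT f (map (\<lambda>q. evalA psym den eqp cv absT P q c) ps))"
    by (intro sound) auto
  then show ?case by (simp add: gam_alpha_memI)
qed

lemma strengthen_root_result_implied:
  assumes "strengthen_root_result psym den U k pplus pminus \<phi> res"
  shows "imp den {pplus} res"
proof -
  obtain L where L: "set L = conjs k {p \<in> U. psym p = psym pplus \<and> imp den {pplus} {p}}"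
    and res: "res = fold (\<lambda>\<psi> acc. if imp den acc \<psi> \<and> gam den (\<phi> \<union> \<psi>) \<subseteq> pminus then \<psi> else acc)
      L {pplus}"
    using assms unfolding strengthen_root_result_def by blast
  have "res \<in> insert {pplus} (set L)"
    unfolding res by (rule fold_select_mem)
  then show ?thesis
  proof
    assume "res \<in> set L"
    then show ?thesis unfolding L by (rule imp_conjs)
  qed (simp add: imp_def)
qed

lemma strengthen_root_result_excludes:
  assumes "strengthen_root_result psym den U k pplus pminus \<phi> res"
    and "gam den (\<phi> \<union> {pplus}) \<subseteq> pminus"
  shows "gam den (\<phi> \<union> res) \<subseteq> pminus"
proof -
  obtain L where res: "res = fold (\<lambda>\<psi> acc. if imp den acc \<psi> \<and> gam den (\<phi> \<union> \<psi>) \<subseteq> pminus then \<psi> else acc)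
      L {pplus}"
    using assms(1) unfolding strengthen_root_result_def by blast
  show ?thesis
    unfolding res
    by (rule fold_select_invariant[where R = "\<lambda>acc. gam den (\<phi> \<union> acc) \<subseteq> pminus"])
       (use assms(2) in auto)
qed

lemma strengthen_children_result_implied:
  assumes "strengthen_children_result psym den absT U k f phis varphis \<phi>p res"
  shows "length res = length phis" and "\<And>i. i < length phis \<Longrightarrow> imp den {phis ! i} (res ! i)"
proof -
  obtain L where L: "set L = {\<psi>s. length \<psi>s = length phis \<and>
        (\<forall>i<length phis. \<psi>s ! i \<in> conjs k {p \<in> U. psym p = psym (phis ! i) \<and> imp den {phis ! i} {p}})}"
    and res: "res = fold (\<lambda>\<psi>s acc.
        if (\<forall>i<length phis. imp den (acc ! i) (\<psi>s ! i)) \<and> imp den (absT f (map2 (\<union>) varphis \<psi>s)) \<phi>p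
        then \<psi>s else acc) L (map (\<lambda>p. {p}) phis)"
    using assms unfolding strengthen_children_result_def by blast
  have res_cases: "res \<in> insert (map (\<lambda>p. {p}) phis) (set L)"
    unfolding res by (rule fold_select_mem)
  then show "length res = length phis"
    using L by auto
  show "imp den {phis ! i} (res ! i)" if "i < length phis" for i
    using res_cases
  proof
    assume "res \<in> set L"
    then show ?thesis
      using L that by (auto intro: imp_conjs)
  qed (simp add: imp_def that)
qed

lemma strengthen_children_result_sound:
  assumes "strengthen_children_result psym den absT U k f phis varphis \<phi>p res"
    and "imp den (absT f (map2 (\<union>) varphis (map (\<lambda>p. {p}) phis))) \<phi>p"
  shows "imp den (absT f (map2 (\<union>) varphis res)) \<phi>p"
  using assms unfolding strengthen_children_result_def
  by (auto intro: fold_select_invariant[where R = "\<lambda>acc. imp den (absT f (map2 (\<union>) varphis acc)) \<phi>p"])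

lemma imp_absT_eq_args:
  assumes den_eqp: "\<And>s c. den (eqp s c) = {c}"
    and mono: "\<And>\<phi>s \<phi>s'. length \<phi>s = length \<phi>s' \<Longrightarrow> (\<forall>i<length \<phi>s. imp den (\<phi>s ! i) (\<phi>s' ! i))
                   \<Longrightarrow> imp den (absT f \<phi>s) (absT f \<phi>s')"
    and precise: "imp den (absT f (map2 (\<lambda>si ci. {eqp si ci}) ss cs)) {eqp s (fs f cs)}"
    and len: "length ss = length cs" "length \<phi>s = length cs"
    and val: "fs f cs \<in> gam den \<phi>p"
  shows "imp den (absT f (map2 (\<union>) \<phi>s (map (\<lambda>p. {p}) (map2 eqp ss cs)))) \<phi>p"
proof -
  have "imp den (absT f (map2 (\<union>) \<phi>s (map (\<lambda>p. {p}) (map2 eqp ss cs))))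
                (absT f (map2 (\<lambda>si ci. {eqp si ci}) ss cs))"
    using len by (intro mono) (auto simp: imp_def gam_def)
  moreover have "imp den {eqp s (fs f cs)} \<phi>p"
    using val den_eqp by (simp add: imp_singleton_iff)
  ultimately show ?thesis using precise imp_trans by metis
qed

context
  fixes psym :: "'p \<Rightarrow> 's" and den :: "'p \<Rightarrow> 'v set" and eqp :: "'s \<Rightarrow> 'v \<Rightarrow> 'p"
    and cv :: "'c \<Rightarrow> 'v" and fs :: "'f \<Rightarrow> 'v list \<Rightarrow> 'v"
    and absT :: "'f \<Rightarrow> 'p set list \<Rightarrow> 'p set" and U P :: "'p set" and k :: nat
    and \<Pi> :: "('s,'c,'f) prog" and ein eout :: 'v and I :: "nat list \<Rightarrow> 'p set"
  assumes run: "construct_proof_result psym den eqp cv fs absT U P k \<Pi> ein eout I"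
    and den_eqp: "\<And>s c. den (eqp s c) = {c}"
begin

lemma construct_proof_result_childrenE:
  assumes "subtree \<Pi> pos = Some (App s f ps)"
  obtains \<psi>s where
    "strengthen_children_result psym den absT U k f
       (map2 eqp (map sym_of ps) (map (\<lambda>q. eval cv fs q ein) ps))
       (map (\<lambda>q. evalA psym den eqp cv absT P q ein) ps) (I pos) \<psi>s"
    "\<And>i. i < length ps \<Longrightarrow> I (pos @ [i]) = evalA psym den eqp cv absT P (ps ! i) ein \<union> \<psi>s ! i"
proof -
  have "map2 eqp (map sym_of ps) (map (\<lambda>q. eval cv fs q ein) ps)
      = map (\<lambda>q. eqp (sym_of q) (eval cv fs q ein)) ps"
    by (induction ps) auto
  moreover obtain \<psi>s where
    "strengthen_children_result psym den absT U k f
       (map (\<lambda>q. eqp (sym_of q) (eval cv fs q ein)) ps)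
       (map (\<lambda>q. evalA psym den eqp cv absT P q ein) ps) (I pos) \<psi>s"
    "\<forall>i<length ps. I (pos @ [i]) = evalA psym den eqp cv absT P (ps ! i) ein \<union> \<psi>s ! i"
    using run assms unfolding construct_proof_result_def by blast
  ultimately show ?thesis
    using that by simp
qed

lemma construct_proof_result_value:
  assumes sound: "\<And>f \<phi>s cs. length cs = length \<phi>s \<Longrightarrow> (\<forall>i<length cs. cs ! i \<in> gam den (\<phi>s ! i))
                   \<Longrightarrow> fs f cs \<in> gam den (absT f \<phi>s)"
    and node: "subtree \<Pi> pos = Some q"
  shows "eval cv fs q ein \<in> gam den (I pos)"
proof -
  have evalA_value: "eval cv fs q' ein \<in> gam den (evalA psym den eqp cv absT P q' ein)" for q'
    using eval_in_gam_evalA[where eqp = eqp and fs = fs and absT = absT, OF den_eqp sound] .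
  show ?thesis
  proof (cases pos rule: rev_exhaust)
    case Nil
    obtain \<psi> where "strengthen_root_result psym den U k (eqp (sym_of \<Pi>) (eval cv fs \<Pi> ein))
        (- {eout}) (evalA psym den eqp cv absT P \<Pi> ein) \<psi>"
      and "I [] = evalA psym den eqp cv absT P \<Pi> ein \<union> \<psi>"
      using run unfolding construct_proof_result_def by blast
    then show ?thesis
      using Nil node strengthen_root_result_implied evalA_value
      by (fastforce simp: gam_Un imp_singleton_iff den_eqp)
  next
    case (snoc pos' i)
    then obtain s f ps where sp: "subtree \<Pi> pos' = Some (App s f ps)" "i < length ps" "ps ! i = q"
      using subtree_snocD node by blast
    then obtain \<psi>s where
      res: "strengthen_children_result psym den absT U k f
         (map2 eqp (map sym_of ps) (map (\<lambda>q. eval cv fs q ein) ps))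
         (map (\<lambda>q. evalA psym den eqp cv absT P q ein) ps) (I pos') \<psi>s"
      and I_child: "I (pos' @ [i]) = evalA psym den eqp cv absT P q ein \<union> \<psi>s ! i"
      using construct_proof_result_childrenE[OF sp(1)] by metis
    have "eval cv fs q ein \<in> gam den (\<psi>s ! i)"
      using strengthen_children_result_implied(2)[OF res, of i] sp
      by (simp add: imp_singleton_iff den_eqp)
    then show ?thesis
      using snoc I_child evalA_value by (simp add: gam_Un)
  qed
qed

lemma construct_proof_result_App:
  assumes sound: "\<And>f \<phi>s cs. length cs = length \<phi>s \<Longrightarrow> (\<forall>i<length cs. cs ! i \<in> gam den (\<phi>s ! i))
                   \<Longrightarrow> fs f cs \<in> gam den (absT f \<phi>s)"
    and mono: "\<And>f \<phi>s \<phi>s'. length \<phi>s = length \<phi>s' \<Longrightarrow> (\<forall>i<length \<phi>s. imp den (\<phi>s ! i) (\<phi>s' ! i))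
                   \<Longrightarrow> imp den (absT f \<phi>s) (absT f \<phi>s')"
    and precise: "\<And>f ss cs s. length ss = length cs
                   \<Longrightarrow> imp den (absT f (map2 (\<lambda>si ci. {eqp si ci}) ss cs)) {eqp s (fs f cs)}"
    and node: "subtree \<Pi> pos = Some (App s f ps)"
  shows "imp den (absT f (map (\<lambda>i. I (pos @ [i])) [0..<length ps])) (I pos)"
proof -
  obtain \<psi>s where
    res: "strengthen_children_result psym den absT U k f
       (map2 eqp (map sym_of ps) (map (\<lambda>q. eval cv fs q ein) ps))
       (map (\<lambda>q. evalA psym den eqp cv absT P q ein) ps) (I pos) \<psi>s"
    and I_child: "\<And>i. i < length ps \<Longrightarrow> I (pos @ [i]) = evalA psym den eqp cv absT P (ps ! i) ein \<union> \<psi>s ! i"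
    using construct_proof_result_childrenE[OF node] by blast
  have "eval cv fs (App s f ps) ein \<in> gam den (I pos)"
    using construct_proof_result_value[OF sound node] .
  then have "imp den (absT f (map2 (\<union>) (map (\<lambda>q. evalA psym den eqp cv absT P q ein) ps)
      (map (\<lambda>p. {p}) (map2 eqp (map sym_of ps) (map (\<lambda>q. eval cv fs q ein) ps))))) (I pos)"
    by (intro imp_absT_eq_args[where den = den and eqp = eqp and absT = absT and s = s])
       (use den_eqp mono precise in auto)
  then have "imp den (absT f (map2 (\<union>) (map (\<lambda>q. evalA psym den eqp cv absT P q ein) ps) \<psi>s)) (I pos)"
    by (rule strengthen_children_result_sound[OF res])
  moreover have "map (\<lambda>i. I (pos @ [i])) [0..<length ps]
      = map2 (\<union>) (map (\<lambda>q. evalA psym den eqp cv absT P q ein) ps) \<psi>s"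
    using strengthen_children_result_implied(1)[OF res] I_child by (intro nth_equalityI) auto
  ultimately show ?thesis by simp
qed

lemma construct_proof_result_root_excludes:
  assumes "eval cv fs \<Pi> ein \<noteq> eout"
  shows "eout \<notin> gam den (I [])"
proof -
  obtain \<psi> where "strengthen_root_result psym den U k (eqp (sym_of \<Pi>) (eval cv fs \<Pi> ein)) (- {eout})
      (evalA psym den eqp cv absT P \<Pi> ein) \<psi>" and "I [] = evalA psym den eqp cv absT P \<Pi> ein \<union> \<psi>"
    using run unfolding construct_proof_result_def by blast
  moreover have "gam den (evalA psym den eqp cv absT P \<Pi> ein \<union> {eqp (sym_of \<Pi>) (eval cv fs \<Pi> ein)})
      \<subseteq> - {eout}"
    unfolding gam_Un gam_singleton den_eqp using assms by blast
  ultimately show ?thesis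
    using strengthen_root_result_excludes by fastforce
qed

end

theorem mainTheorem4:
  fixes psym :: "'p \<Rightarrow> 's" and den :: "'p \<Rightarrow> 'v set" and eqp :: "'s \<Rightarrow> 'v \<Rightarrow> 'p"
    and cv :: "'c \<Rightarrow> 'v" and fs :: "'f \<Rightarrow> 'v list \<Rightarrow> 'v"
    and absT :: "'f \<Rightarrow> 'p set list \<Rightarrow> 'p set"
    and U P :: "'p set" and k :: nat
    and G :: "('s,'c,'f) production set" and s0 :: 's
    and \<Pi> :: "('s,'c,'f) prog" and ein eout :: 'v
    and I :: "nat list \<Rightarrow> 'p set"
  assumes k: "k \<ge> 1"
    and eq_preds: "\<forall>s c. den (eqp s c) = {c} \<and> psym (eqp s c) = s \<and> eqp s c \<in> U"
    and sound: "\<forall>f \<phi>s cs. length cs = length \<phi>s \<and> (\<forall>i<length cs. cs ! i \<in> gam den (\<phi>s ! i))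
                   \<longrightarrow> fs f cs \<in> gam den (absT f \<phi>s)"
    and mono: "\<forall>f \<phi>s \<phi>s'. length \<phi>s = length \<phi>s' \<and> (\<forall>i<length \<phi>s. imp den (\<phi>s ! i) (\<phi>s' ! i))
                   \<longrightarrow> imp den (absT f \<phi>s) (absT f \<phi>s')"
    and precise: "\<forall>f ss cs s. length ss = length cs
                   \<longrightarrow> imp den (absT f (map2 (\<lambda>si ci. {eqp si ci}) ss cs)) {eqp s (fs f cs)}"
    and prog: "derives G \<Pi>" "sym_of \<Pi> = s0"
    and wrong: "eval cv fs \<Pi> ein \<noteq> eout"
    and PU: "P \<subseteq> U"
    and consistent: "eout \<in> gam den (evalA psym den eqp cv absT P \<Pi> ein)"
    and run: "construct_proof_result psym den eqp cv fs absT U P k \<Pi> ein eout I"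
  shows "(\<forall>pos s. subtree \<Pi> pos = Some (Var s) \<longrightarrow> imp den {eqp s ein} (I pos))
       \<and> (\<forall>pos s t. subtree \<Pi> pos = Some (Const s t) \<longrightarrow> imp den {eqp s (cv t)} (I pos))
       \<and> (\<forall>pos s f ps. subtree \<Pi> pos = Some (App s f ps) \<longrightarrow>
            imp den (absT f (map (\<lambda>i. I (pos @ [i])) [0..<length ps])) (I pos))
       \<and> eout \<notin> gam den (I [])"
proof -
  have den_eqp: "\<And>s c. den (eqp s c) = {c}"
    using eq_preds by blast
  have node_value: "eval cv fs q ein \<in> gam den (I pos)" if "subtree \<Pi> pos = Some q" for pos q
    by (rule construct_proof_result_value[OF run den_eqp]) (use sound that in auto)
  have "imp den {eqp s ein} (I pos)" if "subtree \<Pi> pos = Some (Var s)" for pos s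
    using node_value[OF that] by (simp add: imp_singleton_iff den_eqp)
  moreover have "imp den {eqp s (cv t)} (I pos)" if "subtree \<Pi> pos = Some (Const s t)" for pos s t
    using node_value[OF that] by (simp add: imp_singleton_iff den_eqp)
  moreover have "imp den (absT f (map (\<lambda>i. I (pos @ [i])) [0..<length ps])) (I pos)"
    if "subtree \<Pi> pos = Some (App s f ps)" for pos s f ps
    by (rule construct_proof_result_App[OF run den_eqp]) (use sound mono precise that in auto)
  moreover have "eout \<notin> gam den (I [])"
    by (rule construct_proof_result_root_excludes[OF run den_eqp wrong])
  ultimately show ?thesis
    by blast
qed

end
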